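(* Let $x_j$ be a real random variable and $\boldsymbol{x}_C$ a random vector independent of $x_j$. If $f(x_j,\boldsymbol{x}_C)=g(x_j)+h(\boldsymbol{x}_C)$, where $g$ is a function of $x_j$ only and $h$ is a function of $\boldsymbol{x}_C$ only, then $$\mathbb{E}_{\boldsymbol{x}_C}\big[I_{ice}(x_j;\boldsymbol{x}_C)\big]=I_{pdp}(x_j).$$
   Context: Inputs are $\boldsymbol{x}=(x_1,\dots,x_m)$ with independent components; $C=\{1,\dots,m\}\setminus\{j\}$ and $\boldsymbol{x}_C$ denotes the vector of the inputs with indices in $C$. $\mathbb{E}_{z}$ and $\mathbb{V}_{z}$ denote expectation and variance taken with respect to the random variable $z$ only, the other arguments being held fixed. For a fixed value of $\boldsymbol{x}_C$, the ICE importance is $I_{ice}(x_j;\boldsymbol{x}_C)=\sqrt{\mathbb{V}_{x_j}[f(x_j,\boldsymbol{x}_C)]}$. The PDP importance is $I_{pdp}(x_j)=\sqrt{\mathbb{V}_{x_j}\big[\mathbb{E}_{\boldsymbol{x}_C}[f(x_j,\boldsymbol{x}_C)]\big]}$. All expectations and variances involved are assumed to exist and be finite. *)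

theory Defs
  imports "HOL-Probability.Probability"
begin

definition var_wrt :: "'a measure \<Rightarrow> ('a \<Rightarrow> real) \<Rightarrow> real" where
  "var_wrt P u = (\<integral>x. (u x - (\<integral>y. u y \<partial>P))\<^sup>2 \<partial>P)"

text \<open>ICE importance of x_j at a fixed value c of x_C; Pj is the law of x_j.\<close>
definition I_ice :: "real measure \<Rightarrow> (real \<Rightarrow> 'c \<Rightarrow> real) \<Rightarrow> 'c \<Rightarrow> real" where
  "I_ice Pj f c = sqrt (var_wrt Pj (\<lambda>x. f x c))"

text \<open>PDP importance of x_j; Pj, PC are the laws of x_j and x_C.\<close>
definition I_pdp :: "real measure \<Rightarrow> 'c measure \<Rightarrow> (real \<Rightarrow> 'c \<Rightarrow> real) \<Rightarrow> real" where
  "I_pdp Pj PC f = sqrt (var_wrt Pj (\<lambda>x. \<integral>c. f x c \<partial>PC))"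

end

theory Submission
  imports Defs
begin

text \<open>For an additive model f x c = g x + h c, every ICE curve is the vertical translate
  g + h c of g, and the partial dependence curve is the translate g + E[h].  Variance is
  invariant under translation, so the ICE importance is the constant sqrt (Var g), whose
  mean over x_C is again sqrt (Var g), the PDP importance.\<close>

lemma (in prob_space) integral_add_const:
  fixes u :: "'a \<Rightarrow> real"
  assumes "integrable M u"
  shows "(\<integral>x. u x + a \<partial>M) = (\<integral>x. u x \<partial>M) + a"
  using Bochner_Integration.integral_add[OF assms, of "\<lambda>_. a"] by (simp add: prob_space)

lemma var_wrt_add_const:
  assumes "prob_space P" and "integrable P u"
  shows "var_wrt P (\<lambda>x. u x + a) = var_wrt P u"
  using prob_space.integral_add_const[OF assms] by (simp add: var_wrt_def)

lemma I_ice_additive: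
  assumes "prob_space P" and "integrable P g"
  shows "I_ice P (\<lambda>x c. g x + h c) c = sqrt (var_wrt P g)"
  using var_wrt_add_const[OF assms] by (simp add: I_ice_def)

lemma I_pdp_additive:
  assumes "prob_space P" and "prob_space Q" and "integrable P g" and "integrable Q h"
  shows "I_pdp P Q (\<lambda>x c. g x + h c) = sqrt (var_wrt P g)"
proof -
  have "(\<integral>c. g x + h c \<partial>Q) = g x + (\<integral>c. h c \<partial>Q)" for x
    using prob_space.integral_add_const[OF assms(2,4), of "g x"] by (simp add: add.commute)
  then show ?thesis
    using var_wrt_add_const[OF assms(1,3)] by (simp add: I_pdp_def)
qed

theorem theorem1:
  fixes M :: "'a measure" and X :: "'a \<Rightarrow> real" and N :: "'c measure" and Z :: "'a \<Rightarrow> 'c"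
    and g :: "real \<Rightarrow> real" and h :: "'c \<Rightarrow> real" and f :: "real \<Rightarrow> 'c \<Rightarrow> real"
  assumes "prob_space M"
    and "X \<in> borel_measurable M" and "Z \<in> measurable M N"
    and indep: "\<forall>A \<in> sets borel. \<forall>B \<in> sets N.
                 measure M (X -` A \<inter> Z -` B \<inter> space M)
                   = measure M (X -` A \<inter> space M) * measure M (Z -` B \<inter> space M)"
    and "g \<in> borel_measurable borel" and "h \<in> borel_measurable N"
    and "f = (\<lambda>x c. g x + h c)"
    and "integrable (distr M borel X) g"
    and "integrable (distr M borel X) (\<lambda>x. (g x)\<^sup>2)"
    and "integrable (distr M N Z) h"
  shows "(\<integral>c. I_ice (distr M borel X) f c \<partial>(distr M N Z))
           = I_pdp (distr M borel X) (distr M N Z) f"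
proof -
  have P: "prob_space (distr M borel X)"
    using assms(1,2) by (rule prob_space.prob_space_distr)
  have Q: "prob_space (distr M N Z)"
    using assms(1,3) by (rule prob_space.prob_space_distr)
  have "(\<integral>c. I_ice (distr M borel X) f c \<partial>(distr M N Z))
      = (\<integral>c. sqrt (var_wrt (distr M borel X) g) \<partial>(distr M N Z))"
    by (intro Bochner_Integration.integral_cong) (simp_all add: assms(7) I_ice_additive[OF P assms(8)])
  also have "\<dots> = sqrt (var_wrt (distr M borel X) g)"
    using prob_space.prob_space[OF Q] by simp
  also have "\<dots> = I_pdp (distr M borel X) (distr M N Z) f"
    using I_pdp_additive[OF P Q assms(8,10)] by (simp add: assms(7))
  finally show ?thesis .
qed

end
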